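(* Let $G$ be a connected block graph on $n$ vertices with blocks $B_1,\dots,B_t$ of orders $b_1,\dots,b_t$, and equip $V(G)$ with a Hamming labelling as described in the context. Let $S\subseteq V(G)$ with $|S|=k$, $2\le k\le n$. Then $$d(S)=\sum_{i=1}^t \ell_i(S) - t,$$ where $\ell_i(S)$ is the number of distinct values taken by the $i$-th coordinates of the labels of the vertices in $S$.
   Context: A block of a graph is a maximal connected induced subgraph without cut vertices; a block graph is a graph in which every block is a clique. For connected $G$ and $S\subseteq V(G)$, the Steiner distance $d(S)$ is the minimum number of edges of a connected subgraph of $G$ whose vertex set contains $S$. $G\setminus B_i$ denotes the graph obtained from $G$ by deleting all edges of block $B_i$; each connected component of $G\setminus B_i$ contains exactly one vertex of $B_i$. Hamming labelling: for each $i\in\{1,\dots,t\}$ choose an injective map $f_i:V(B_i)\to\{0,1,\dots,b_i-1\}$; for a vertex $u\in V(G)$, its $i$-th coordinate is $f_i(w)$, where $w$ is the unique vertex of $B_i$ lying in the connected component of $G\setminus B_i$ that contains $u$. The label of $u$ is the $t$-tuple of its coordinates (this gives an isometric embedding of $G$ into $K_{b_1}\square\cdots\square K_{b_t}$). *)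

theory Defs
  imports Main
begin

definition simple_graph :: "'a set \<Rightarrow> 'a set set \<Rightarrow> bool" where
  "simple_graph V E \<longleftrightarrow> finite V \<and> (\<forall>e\<in>E. e \<subseteq> V \<and> card e = 2)"

definition reach :: "'a set set \<Rightarrow> 'a \<Rightarrow> 'a \<Rightarrow> bool" where
  "reach F x y \<longleftrightarrow> (\<lambda>a b. {a, b} \<in> F)\<^sup>*\<^sup>* x y"

definition conn :: "'a set \<Rightarrow> 'a set set \<Rightarrow> bool" where
  "conn W F \<longleftrightarrow> (\<forall>x\<in>W. \<forall>y\<in>W. reach F x y)"

definition induced :: "'a set set \<Rightarrow> 'a set \<Rightarrow> 'a set set" where
  "induced E B = {e \<in> E. e \<subseteq> B}"

definition no_cut :: "'a set set \<Rightarrow> 'a set \<Rightarrow> bool" where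
  "no_cut E B \<longleftrightarrow> conn B (induced E B) \<and>
     (\<forall>v\<in>B. conn (B - {v}) (induced E (B - {v})))"

definition is_block :: "'a set \<Rightarrow> 'a set set \<Rightarrow> 'a set \<Rightarrow> bool" where
  "is_block V E B \<longleftrightarrow> B \<subseteq> V \<and> B \<noteq> {} \<and> no_cut E B \<and>
     (\<forall>B'. B \<subseteq> B' \<and> B' \<subseteq> V \<and> no_cut E B' \<longrightarrow> B' = B)"

definition blocks :: "'a set \<Rightarrow> 'a set set \<Rightarrow> 'a set set" where
  "blocks V E = {B. is_block V E B}"

definition is_clique :: "'a set set \<Rightarrow> 'a set \<Rightarrow> bool" where
  "is_clique E B \<longleftrightarrow> (\<forall>x\<in>B. \<forall>y\<in>B. x \<noteq> y \<longrightarrow> {x, y} \<in> E)"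

definition block_graph :: "'a set \<Rightarrow> 'a set set \<Rightarrow> bool" where
  "block_graph V E \<longleftrightarrow> (\<forall>B\<in>blocks V E. is_clique E B)"

definition steiner_dist :: "'a set \<Rightarrow> 'a set set \<Rightarrow> 'a set \<Rightarrow> nat" where
  "steiner_dist V E S = (LEAST m. \<exists>W F. S \<subseteq> W \<and> W \<subseteq> V \<and> F \<subseteq> E \<and>
       (\<forall>e\<in>F. e \<subseteq> W) \<and> conn W F \<and> card F = m)"

definition hamming_maps :: "'a set \<Rightarrow> 'a set set \<Rightarrow> ('a set \<Rightarrow> 'a \<Rightarrow> nat) \<Rightarrow> bool" where
  "hamming_maps V E f \<longleftrightarrow>
     (\<forall>B\<in>blocks V E. inj_on (f B) B \<and> f B ` B \<subseteq> {0..<card B})"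

text \<open>The coordinate of u for block B: f B w, where w is the unique vertex of B in
  the component of G \ B (edges of B deleted) containing u.\<close>
definition coord :: "'a set set \<Rightarrow> ('a set \<Rightarrow> 'a \<Rightarrow> nat) \<Rightarrow> 'a set \<Rightarrow> 'a \<Rightarrow> nat" where
  "coord E f B u = f B (THE w. w \<in> B \<and> reach (E - induced E B) u w)"

definition ell :: "'a set set \<Rightarrow> ('a set \<Rightarrow> 'a \<Rightarrow> nat) \<Rightarrow> 'a set \<Rightarrow> 'a set \<Rightarrow> nat" where
  "ell E f B S = card (coord E f B ` S)"

end

theory Submission
  imports Defs
begin

text \<open>
  Fix a block B. Every vertex u reaches exactly one vertex of B without using edges of B, its
  projection onto B: the vertex of B nearest to u is reached this way, and two vertices of B joined
  outside B would, via a shortest such connection, form an ear of B, contradicting the maximality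
  of B. The B-coordinate of u is the label of its projection, so \<open>ell E f B S\<close> counts the
  projections of S onto B.

  A connected subgraph containing S projects onto a connected subgraph of B containing the
  projections of S, so it has at least \<open>ell E f B S - 1\<close> edges inside B, and distinct blocks
  share no edge. Conversely, the union over all blocks of a star on the projections of S connects
  S: along a shortest path between two vertices of S, every edge joins the projections of the two
  ends onto its block.
\<close>

section \<open>Reachability, walks and distances\<close>

lemma reach_refl [simp]: "reach F x x"
  by (simp add: reach_def)

lemma reach_edge: "{x, y} \<in> F \<Longrightarrow> reach F x y"
  unfolding reach_def by (rule r_into_rtranclp)

lemma reach_trans: "reach F x y \<Longrightarrow> reach F y z \<Longrightarrow> reach F x z"
  unfolding reach_def by (rule rtranclp_trans)

lemma reach_sym: "reach F x y \<Longrightarrow> reach F y x"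
  unfolding reach_def
proof (induction rule: rtranclp_induct)
  case (step y z)
  then have "{z, y} \<in> F" by (simp add: insert_commute)
  then show ?case using step(3) by (rule converse_rtranclp_into_rtranclp)
qed simp

lemma reach_mono: "F \<subseteq> G \<Longrightarrow> reach F x y \<Longrightarrow> reach G x y"
  unfolding reach_def by (erule rtranclp_mono[THEN predicate2D, rotated]) auto

lemma reach_chain: "(\<forall>i<n. reach F (p i) (p (Suc i))) \<Longrightarrow> reach F (p 0) (p n)"
  by (induction n) (auto intro: reach_trans)

lemma reach_closed:
  assumes "reach F x y" "x \<in> V" "\<forall>e\<in>F. e \<subseteq> V"
  shows "y \<in> V"
  using assms(1) unfolding reach_def
  by (induction rule: rtranclp_induct) (use assms(2,3) in auto)

definition walk :: "'a set set \<Rightarrow> (nat \<Rightarrow> 'a) \<Rightarrow> nat \<Rightarrow> bool" where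
  "walk F p n \<longleftrightarrow> (\<forall>i<n. {p i, p (Suc i)} \<in> F)"

lemma reach_iff_walk: "reach F x y \<longleftrightarrow> (\<exists>p n. walk F p n \<and> p 0 = x \<and> p n = y)"
  unfolding reach_def walk_def rtranclp_power relpowp_fun_conv by blast

lemma walk_reach: "walk F p n \<Longrightarrow> reach F (p 0) (p n)"
  by (auto simp: reach_iff_walk)

lemma walk_mono: "walk F p n \<Longrightarrow> F \<subseteq> G \<Longrightarrow> walk G p n"
  by (auto simp: walk_def)

lemma walk_segment: "walk F p n \<Longrightarrow> j \<le> n \<Longrightarrow> walk F (\<lambda>k. p (i + k)) (j - i)"
  by (simp add: walk_def)

lemma walk_rev: "walk F p n \<Longrightarrow> walk F (\<lambda>k. p (n - k)) n"
  unfolding walk_def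
proof (intro allI impI)
  fix i assume "\<forall>i<n. {p i, p (Suc i)} \<in> F" "i < n"
  then have "{p (n - Suc i), p (Suc (n - Suc i))} \<in> F" by simp
  moreover have "Suc (n - Suc i) = n - i" using \<open>i < n\<close> by simp
  ultimately show "{p (n - i), p (n - Suc i)} \<in> F" by (simp add: insert_commute)
qed

lemma walk_append:
  assumes "walk F p m" "walk F q n" "p m = q 0"
  shows "walk F (\<lambda>k. if k \<le> m then p k else q (k - m)) (m + n)"
  unfolding walk_def
proof (intro allI impI)
  fix i assume "i < m + n"
  then consider "i < m" | "i = m" | "m < i" by linarith
  then show "{if i \<le> m then p i else q (i - m), if Suc i \<le> m then p (Suc i) else q (Suc i - m)} \<in> F"
  proof cases
    case 1 then show ?thesis using assms(1) by (simp add: walk_def)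
  next
    case 2 then show ?thesis using assms(2,3) \<open>i < m + n\<close> by (simp add: walk_def)
  next
    case 3 then show ?thesis using assms(2) \<open>i < m + n\<close> by (simp add: walk_def Suc_diff_le)
  qed
qed

lemma walk_in_vertices:
  assumes "walk F p n" "p 0 \<in> V" "\<forall>e\<in>F. e \<subseteq> V" "k \<le> n"
  shows "p k \<in> V"
  using reach_closed[OF walk_reach[OF walk_segment[OF assms(1,4), of 0]]] assms(2,3) by simp

definition gdist :: "'a set set \<Rightarrow> 'a \<Rightarrow> 'a \<Rightarrow> nat" where
  "gdist F x y = (LEAST n. \<exists>p. walk F p n \<and> p 0 = x \<and> p n = y)"

lemma gdist_le: "walk F p n \<Longrightarrow> gdist F (p 0) (p n) \<le> n"
  unfolding gdist_def by (rule Least_le) blast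

lemma shortest_walk:
  assumes "reach F x y"
  obtains p where "walk F p (gdist F x y)" "p 0 = x" "p (gdist F x y) = y"
  using LeastI_ex[of "\<lambda>n. \<exists>p. walk F p n \<and> p 0 = x \<and> p n = y"] assms
  unfolding reach_iff_walk gdist_def by blast

lemma gdist_segment:
  assumes "walk F p n" "i \<le> j" "j \<le> n"
  shows "reach F (p i) (p j)" "gdist F (p i) (p j) \<le> j - i"
  using walk_reach[OF walk_segment[OF assms(1,3), of i]] gdist_le[OF walk_segment[OF assms(1,3), of i]]
    assms(2)
  by simp_all

lemma gdist_edge: "{x, y} \<in> F \<Longrightarrow> gdist F x y \<le> 1"
  using gdist_le[of F "\<lambda>k. if k = 0 then x else y" 1] by (simp add: walk_def)

lemma gdist_refl [simp]: "gdist F x x = 0"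
  using gdist_le[of F "\<lambda>_. x" 0] by (simp add: walk_def)

lemma gdist_sym:
  assumes "reach F x y"
  shows "gdist F x y = gdist F y x"
proof -
  have le: "gdist F v u \<le> gdist F u v" if uv: "reach F u v" for u v
  proof -
    obtain p where "walk F p (gdist F u v)" "p 0 = u" "p (gdist F u v) = v"
      using shortest_walk[OF uv] .
    then show ?thesis using gdist_le[OF walk_rev] by fastforce
  qed
  show ?thesis using le[OF assms] le[OF reach_sym[OF assms]] by simp
qed

lemma gdist_triangle:
  assumes "reach F x y" "reach F y z"
  shows "gdist F x z \<le> gdist F x y + gdist F y z"
proof -
  obtain p where p: "walk F p (gdist F x y)" "p 0 = x" "p (gdist F x y) = y"
    using shortest_walk[OF assms(1)] .
  obtain q where q: "walk F q (gdist F y z)" "q 0 = y" "q (gdist F y z) = z"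
    using shortest_walk[OF assms(2)] .
  show ?thesis
    using gdist_le[OF walk_append[OF p(1) q(1)]] p(2,3) q(2,3) by (simp split: if_splits)
qed

lemma geodesic_inj:
  assumes p: "walk F p n" "gdist F (p 0) (p n) = n"
  shows "inj_on p {0..n}"
proof -
  have "p i \<noteq> p j" if "i < j" "j \<le> n" for i j
  proof
    assume eq: "p i = p j"
    have "reach F (p 0) (p i)" "reach F (p i) (p n)"
      using gdist_segment[OF p(1), of 0 i] gdist_segment[OF p(1), of j n] that eq by simp_all
    then have "n \<le> gdist F (p 0) (p i) + gdist F (p i) (p n)" using gdist_triangle p(2) by metis
    also have "\<dots> \<le> i + (n - j)"
      using gdist_segment[OF p(1), of 0 i] gdist_segment[OF p(1), of j n] that eq by simp
    finally show False using that by simp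
  qed
  then show ?thesis by (metis atLeastAtMost_iff inj_onI nat_neq_iff)
qed

definition reachable :: "'a set set \<Rightarrow> 'a set \<Rightarrow> 'a set" where
  "reachable F X = {y. \<exists>x\<in>X. reach F x y}"

lemma reachable_base: "X \<subseteq> reachable F X"
proof
  fix x assume "x \<in> X"
  moreover have "reach F x x" by (rule reach_refl)
  ultimately show "x \<in> reachable F X" unfolding reachable_def by blast
qed

lemma reachable_mono: "X \<subseteq> Y \<Longrightarrow> reachable F X \<subseteq> reachable F Y"
  unfolding reachable_def by blast

lemma reachable_step: "u \<in> reachable F X \<Longrightarrow> {u, v} \<in> F \<Longrightarrow> v \<in> reachable F X"
  unfolding reachable_def by (blast intro: reach_trans reach_edge)

lemma reachable_least:
  assumes "X \<subseteq> Y" "\<And>u v. {u, v} \<in> F \<Longrightarrow> u \<in> Y \<Longrightarrow> v \<in> Y"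
  shows "reachable F X \<subseteq> Y"
proof
  fix y assume "y \<in> reachable F X"
  then obtain x where x: "x \<in> X" "reach F x y" by (auto simp: reachable_def)
  from x(2) show "y \<in> Y" unfolding reach_def
    by (induction rule: rtranclp_induct) (use x(1) assms in blast)+
qed

lemma reachable_insert_edge:
  assumes "c \<in> reachable F X"
  shows "reachable (insert {c, d} F) X \<subseteq> reachable F (insert d X)"
proof (rule reachable_least)
  show "X \<subseteq> reachable F (insert d X)" using reachable_base[of "insert d X" F] by blast
  fix u v assume uv: "{u, v} \<in> insert {c, d} F" "u \<in> reachable F (insert d X)"
  show "v \<in> reachable F (insert d X)"
  proof (cases "{u, v} = {c, d}")
    case True
    have "c \<in> reachable F (insert d X)" using assms reachable_mono[of X "insert d X" F] by blast
    moreover have "d \<in> reachable F (insert d X)" using reachable_base[of "insert d X" F] by blast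
    ultimately show ?thesis using True by (metis doubleton_eq_iff)
  next
    case False
    then have "{u, v} \<in> F" using uv(1) by blast
    with uv(2) show ?thesis by (rule reachable_step)
  qed
qed

lemma reachable_insert_detached:
  assumes "\<not> (\<exists>c d. e = {c, d} \<and> c \<in> reachable F X)"
  shows "reachable (insert e F) X \<subseteq> reachable F X"
proof (rule reachable_least)
  fix u v assume uv: "{u, v} \<in> insert e F" "u \<in> reachable F X"
  then have "{u, v} \<in> F" using assms by blast
  then show "v \<in> reachable F X" using uv(2) by (rule reachable_step[rotated])
qed (rule reachable_base)

lemma card_reachable_le:
  assumes "finite F" "finite X"
  shows "finite (reachable F X) \<and> card (reachable F X) \<le> card X + card F"
  using assms
proof (induction F arbitrary: X rule: finite_induct)
  case empty
  have "reachable {} X \<subseteq> X" by (rule reachable_least) auto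
  then show ?case using reachable_base[of X "{}"] empty.prems by auto
next
  case (insert e F)
  show ?case
  proof (cases "\<exists>c d. e = {c, d} \<and> c \<in> reachable F X")
    case True
    then obtain c d where cd: "e = {c, d}" "c \<in> reachable F X" by blast
    have sub: "reachable (insert e F) X \<subseteq> reachable F (insert d X)"
      using reachable_insert_edge[OF cd(2)] cd(1) by simp
    have fY: "finite (reachable F (insert d X))"
      and "card (reachable F (insert d X)) \<le> card (insert d X) + card F"
      using insert.IH insert.prems by simp_all
    moreover have "card (insert d X) \<le> card X + 1" by (simp add: card_insert_if insert.prems)
    ultimately show ?thesis using card_mono[OF fY sub] finite_subset[OF sub fY] insert.hyps by simp
  next
    case False
    then have sub: "reachable (insert e F) X \<subseteq> reachable F X" by (rule reachable_insert_detached)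
    have fR: "finite (reachable F X)" and "card (reachable F X) \<le> card X + card F"
      using insert.IH insert.prems by simp_all
    then show ?thesis using card_mono[OF fR sub] finite_subset[OF sub fR] insert.hyps by simp
  qed
qed

lemma conn_reachable:
  assumes "\<forall>s\<in>S. \<forall>s'\<in>S. reach F s s'"
  shows "conn (reachable F S) {e \<in> F. e \<subseteq> reachable F S}"
proof -
  define W where "W = reachable F S"
  have lift: "reach {e \<in> F. e \<subseteq> W} s y" if s: "s \<in> S" and r: "reach F s y" for s y
    using r unfolding reach_def[of F]
  proof (induction rule: rtranclp_induct)
    case (step y z)
    have "y \<in> W" using s step(1) unfolding W_def reachable_def reach_def by blast
    then have "{y, z} \<subseteq> W" using reachable_step[of y F S z] step(2) unfolding W_def by blast
    then have "{y, z} \<in> {e \<in> F. e \<subseteq> W}" using step(2) by blast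
    then show ?case by (rule reach_trans[OF step(3) reach_edge])
  qed simp
  have "reach {e \<in> F. e \<subseteq> W} a b" if ab: "a \<in> W" "b \<in> W" for a b
  proof -
    obtain s1 where s1: "s1 \<in> S" "reach F s1 a" using ab(1) unfolding W_def reachable_def by blast
    obtain s2 where s2: "s2 \<in> S" "reach F s2 b" using ab(2) unfolding W_def reachable_def by blast
    have "reach {e \<in> F. e \<subseteq> W} a s1" using lift[OF s1] by (rule reach_sym)
    moreover have "reach {e \<in> F. e \<subseteq> W} s1 b" using lift[OF s1(1) reach_trans[OF _ s2(2)]] assms s1 s2
      by blast
    ultimately show ?thesis by (rule reach_trans)
  qed
  then show ?thesis unfolding conn_def W_def by blast
qed

section \<open>Blocks\<close>

lemma edge_subset_vertices: "simple_graph V E \<Longrightarrow> e \<in> E \<Longrightarrow> e \<subseteq> V"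
  unfolding simple_graph_def by blast

lemma finite_edges:
  assumes "simple_graph V E"
  shows "finite E"
proof -
  have "E \<subseteq> Pow V" using edge_subset_vertices[OF assms] by blast
  moreover have "finite V" using assms by (simp add: simple_graph_def)
  ultimately show ?thesis by (simp add: finite_subset)
qed

lemma induced_mono: "A \<subseteq> C \<Longrightarrow> induced E A \<subseteq> induced E C"
  by (auto simp: induced_def)

lemma conn_by_core:
  assumes "K \<subseteq> T" "conn K G" "G \<subseteq> H" "\<forall>x\<in>T. \<exists>k\<in>K. reach H x k"
  shows "conn T H"
  unfolding conn_def
proof (intro ballI)
  fix x y assume "x \<in> T" "y \<in> T"
  then obtain k1 k2 where k: "k1 \<in> K" "k2 \<in> K" "reach H x k1" "reach H y k2"
    using assms(4) by blast
  have "reach G k1 k2" using assms(2) k(1,2) unfolding conn_def by blast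
  then have "reach H k1 k2" by (rule reach_mono[OF assms(3)])
  then show "reach H x y" using k(3,4) by (blast intro: reach_trans reach_sym)
qed

lemma conn_union:
  assumes "conn A (induced E A)" "conn C (induced E C)" "A \<inter> C \<noteq> {}"
  shows "conn (A \<union> C) (induced E (A \<union> C))"
proof -
  obtain z where z: "z \<in> A" "z \<in> C" using assms(3) by blast
  have hub: "\<forall>x\<in>A \<union> C. \<exists>k\<in>{z}. reach (induced E (A \<union> C)) x k"
  proof (intro ballI bexI)
    fix x assume x: "x \<in> A \<union> C"
    show "reach (induced E (A \<union> C)) x z"
    proof (cases "x \<in> A")
      case True
      then have "reach (induced E A) x z" using assms(1) z(1) unfolding conn_def by blast
      then show ?thesis by (rule reach_mono[OF induced_mono, rotated]) blast
    next
      case False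
      then have "reach (induced E C) x z" using x assms(2) z(2) unfolding conn_def by blast
      then show ?thesis by (rule reach_mono[OF induced_mono, rotated]) blast
    qed
  qed simp
  show ?thesis by (rule conn_by_core[of "{z}" _ "{}", OF _ _ _ hub]) (use z in \<open>auto simp: conn_def\<close>)
qed

lemma no_cut_minus: "no_cut E B \<Longrightarrow> conn (B - {v}) (induced E (B - {v}))"
  unfolding no_cut_def by (cases "v \<in> B") auto

lemma conn_subsingleton: "W \<subseteq> {w} \<Longrightarrow> conn W F"
  unfolding conn_def by (metis reach_refl singletonD subsetD)

lemma no_cut_edge:
  assumes "{x, y} \<in> E"
  shows "no_cut E {x, y}"
  unfolding no_cut_def
proof
  have "reach (induced E {x, y}) x y" using assms by (intro reach_edge) (simp add: induced_def)
  then show "conn {x, y} (induced E {x, y})" unfolding conn_def by (auto intro: reach_sym)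
  show "\<forall>v\<in>{x, y}. conn ({x, y} - {v}) (induced E ({x, y} - {v}))"
  proof
    fix v assume "v \<in> {x, y}"
    then have "{x, y} - {v} \<subseteq> {if v = x then y else x}" by auto
    then show "conn ({x, y} - {v}) (induced E ({x, y} - {v}))" by (rule conn_subsingleton)
  qed
qed

lemma edge_in_block:
  assumes sg: "simple_graph V E" and e: "{x, y} \<in> E"
  obtains B where "is_block V E B" "x \<in> B" "y \<in> B"
proof -
  define DD where "DD = {D. {x, y} \<subseteq> D \<and> D \<subseteq> V \<and> no_cut E D}"
  have finV: "finite V" using sg by (simp add: simple_graph_def)
  have "DD \<subseteq> Pow V" by (auto simp: DD_def)
  then have finDD: "finite DD" using finV by (simp add: finite_subset)
  have "{x, y} \<subseteq> V" by (rule edge_subset_vertices[OF sg e])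
  then have "{x, y} \<in> DD" using no_cut_edge[OF e] by (simp add: DD_def)
  then have "DD \<noteq> {}" by blast
  then have "Max (card ` DD) \<in> card ` DD" using Max_in[of "card ` DD"] finDD by simp
  then obtain D where D: "Max (card ` DD) = card D" "D \<in> DD" by (rule imageE)
  have maxD: "card D' \<le> card D" if "D' \<in> DD" for D'
    using Max_ge[of "card ` DD" "card D'"] finDD that D(1) by simp
  have "is_block V E D"
    unfolding is_block_def
  proof (intro conjI allI impI)
    show "D \<subseteq> V" "no_cut E D" "D \<noteq> {}" using D(2) by (auto simp: DD_def)
    fix B' assume h: "D \<subseteq> B' \<and> B' \<subseteq> V \<and> no_cut E B'"
    then have "B' \<in> DD" using D(2) by (auto simp: DD_def)
    then have "card B' \<le> card D" by (rule maxD)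
    moreover have "finite B'" using h finV finite_subset by blast
    ultimately show "B' = D" using h card_seteq[of B' D] by simp
  qed
  then show thesis by (rule that) (use D(2) in \<open>auto simp: DD_def\<close>)
qed

lemma block_eq_if_two_common:
  assumes B1: "is_block V E B1" and B2: "is_block V E B2"
    and xy: "x \<in> B1 \<inter> B2" "y \<in> B1 \<inter> B2" "x \<noteq> y"
  shows "B1 = B2"
proof -
  have n1: "no_cut E B1" and n2: "no_cut E B2" using B1 B2 by (simp_all add: is_block_def)
  have "conn (B1 \<union> B2) (induced E (B1 \<union> B2))"
    using n1 n2 xy(1) by (intro conn_union) (auto simp: no_cut_def)
  moreover have "conn (B1 \<union> B2 - {v}) (induced E (B1 \<union> B2 - {v}))" for v
  proof -
    have "B1 \<union> B2 - {v} = (B1 - {v}) \<union> (B2 - {v})" by blast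
    moreover have "(B1 - {v}) \<inter> (B2 - {v}) \<noteq> {}" using xy by blast
    ultimately show ?thesis using conn_union[OF no_cut_minus[OF n1] no_cut_minus[OF n2]] by simp
  qed
  ultimately have "no_cut E (B1 \<union> B2)" by (simp add: no_cut_def)
  moreover have "B1 \<union> B2 \<subseteq> V" using B1 B2 by (simp add: is_block_def)
  ultimately have "B1 \<union> B2 = B1" "B1 \<union> B2 = B2"
    using B1 B2 unfolding is_block_def by (meson sup_ge1, meson sup_ge2)
  then show ?thesis by simp
qed

lemma induced_blocks_disjoint:
  assumes sg: "simple_graph V E" and B1: "is_block V E B1" and B2: "is_block V E B2"
    and ne: "B1 \<noteq> B2"
  shows "induced E B1 \<inter> induced E B2 = {}"
proof (rule ccontr)
  assume "induced E B1 \<inter> induced E B2 \<noteq> {}"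
  then obtain e where e: "e \<in> E" "e \<subseteq> B1" "e \<subseteq> B2" by (auto simp: induced_def)
  then have "card e = 2" using sg by (simp add: simple_graph_def)
  then obtain a b where "e = {a, b}" "a \<noteq> b" by (meson card_2_iff)
  then have "B1 = B2" using block_eq_if_two_common[OF B1 B2, of a b] e(2,3) by blast
  then show False using ne by contradiction
qed

lemma finite_blocks: "simple_graph V E \<Longrightarrow> finite (blocks V E)"
  unfolding blocks_def is_block_def simple_graph_def by (simp add: finite_subset)

lemma reach_induced_walk_segment:
  assumes "walk E p n" "i \<le> j" "j \<le> n" "p ` {i..j} \<subseteq> X"
  shows "reach (induced E X) (p i) (p j)"
proof -
  have "walk (induced E X) (\<lambda>k. p (i + k)) (j - i)"
    unfolding walk_def induced_def
  proof (intro allI impI CollectI conjI)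
    fix k assume k: "k < j - i"
    then show "{p (i + k), p (i + Suc k)} \<in> E" using assms(1,3) by (simp add: walk_def)
    have "i + k \<in> {i..j}" "i + Suc k \<in> {i..j}" using k by auto
    then show "{p (i + k), p (i + Suc k)} \<subseteq> X" using assms(4) by blast
  qed
  then show ?thesis using walk_reach assms(2) by fastforce
qed

lemma conn_ear_minus:
  assumes nc: "no_cut E B" and p: "walk E p n" "p 0 \<in> B" "p n \<in> B"
    and inj: "inj_on p {0..n}" and Z: "Z \<subseteq> {v}"
  shows "conn (B \<union> p ` {0..n} - Z) (induced E (B \<union> p ` {0..n} - Z))"
proof -
  define D where "D = B \<union> p ` {0..n} - Z"
  have "B - Z = B \<or> B - Z = B - {v}" using Z by blast
  then have connB: "conn (B - Z) (induced E (B - Z))"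
    using nc no_cut_minus[OF nc, of v] unfolding no_cut_def by (elim disjE) simp_all
  have hub: "\<forall>x\<in>D. \<exists>k\<in>B - Z. reach (induced E D) x k"
  proof
    fix x assume x: "x \<in> D"
    show "\<exists>k\<in>B - Z. reach (induced E D) x k"
    proof (cases "x \<in> B")
      case True
      then show ?thesis using x by (intro bexI[of _ x]) (auto simp: D_def)
    next
      case False
      then obtain i where i: "i \<le> n" "x = p i" "p i \<notin> Z" using x by (auto simp: D_def)
      have "Z \<inter> p ` {0..i} = {} \<or> Z \<inter> p ` {i..n} = {}"
      proof (rule ccontr)
        assume "\<not> ?thesis"
        then obtain j j' where j: "j \<le> i" "i \<le> j'" "j' \<le> n" "p j \<in> Z" "p j' \<in> Z" by auto
        then have "p j = p j'" using Z by blast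
        then have "j = j'" using inj j by (auto dest: inj_onD)
        then show False using i(3) j by (metis le_antisym)
      qed
      then show ?thesis
      proof
        assume avoid: "Z \<inter> p ` {0..i} = {}"
        then have "p ` {0..i} \<subseteq> D" using i(1) by (auto simp: D_def)
        then have "reach (induced E D) (p 0) (p i)"
          by (rule reach_induced_walk_segment[OF p(1) le0 i(1)])
        then have "reach (induced E D) x (p 0)" using i(2) by (simp add: reach_sym)
        moreover have "p 0 \<in> B - Z" using p(2) avoid by auto
        ultimately show ?thesis by blast
      next
        assume avoid: "Z \<inter> p ` {i..n} = {}"
        then have "p ` {i..n} \<subseteq> D" by (auto simp: D_def)
        then have "reach (induced E D) (p i) (p n)"
          by (rule reach_induced_walk_segment[OF p(1) i(1) order_refl])
        moreover have "p n \<in> B - Z" using p(3) avoid i(1) by auto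
        ultimately show ?thesis using i(2) by blast
      qed
    qed
  qed
  have core: "B - Z \<subseteq> D" by (auto simp: D_def)
  show ?thesis unfolding D_def[symmetric] by (rule conn_by_core[OF core connB induced_mono[OF core] hub])
qed

lemma no_cut_ear:
  assumes "no_cut E B" "walk E p n" "p 0 \<in> B" "p n \<in> B" "inj_on p {0..n}"
  shows "no_cut E (B \<union> p ` {0..n})"
  unfolding no_cut_def
proof
  show "conn (B \<union> p ` {0..n}) (induced E (B \<union> p ` {0..n}))"
    using conn_ear_minus[OF assms, where Z="{}"] by simp
  show "\<forall>v\<in>B \<union> p ` {0..n}. conn (B \<union> p ` {0..n} - {v}) (induced E (B \<union> p ` {0..n} - {v}))"
    using conn_ear_minus[OF assms, where Z="{v}" and v=v for v] by blast
qed

lemma nearest_distinct_pair: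
  assumes "w1 \<in> B" "w2 \<in> B" "w1 \<noteq> w2" "reach F w1 w2"
  obtains a b where "a \<in> B" "b \<in> B" "a \<noteq> b" "reach F a b"
    "\<And>x y. x \<in> B \<Longrightarrow> y \<in> B \<Longrightarrow> x \<noteq> y \<Longrightarrow> reach F x y \<Longrightarrow> gdist F a b \<le> gdist F x y"
proof -
  define sep where "sep = (\<lambda>q. fst q \<in> B \<and> snd q \<in> B \<and> fst q \<noteq> snd q \<and> reach F (fst q) (snd q))"
  have "sep (w1, w2)" using assms by (simp add: sep_def)
  then obtain q where q: "sep q"
    and q_min: "\<And>q'. sep q' \<Longrightarrow> gdist F (fst q) (snd q) \<le> gdist F (fst q') (snd q')"
    using ex_has_least_nat[of sep "(w1, w2)" "\<lambda>q. gdist F (fst q) (snd q)"] by blast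
  show thesis
  proof (rule that[of "fst q" "snd q"])
    show "fst q \<in> B" "snd q \<in> B" "fst q \<noteq> snd q" "reach F (fst q) (snd q)"
      using q by (simp_all add: sep_def)
    show "gdist F (fst q) (snd q) \<le> gdist F x y" if "x \<in> B" "y \<in> B" "x \<noteq> y" "reach F x y" for x y
      using q_min[of "(x, y)"] that by (simp add: sep_def)
  qed
qed

lemma block_vertices_separated:
  assumes sg: "simple_graph V E" and B: "is_block V E B"
    and w: "w1 \<in> B" "w2 \<in> B" and r: "reach (E - induced E B) w1 w2"
  shows "w1 = w2"
proof (rule ccontr)
  assume "w1 \<noteq> w2"
  define F where "F = E - induced E B"
  obtain a b where ab: "a \<in> B" "b \<in> B" "a \<noteq> b" "reach F a b"
    and closest: "\<And>x y. x \<in> B \<Longrightarrow> y \<in> B \<Longrightarrow> x \<noteq> y \<Longrightarrow> reach F x y \<Longrightarrow> gdist F a b \<le> gdist F x y"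
    using nearest_distinct_pair[OF w \<open>w1 \<noteq> w2\<close>] r unfolding F_def by blast
  define n where "n = gdist F a b"
  obtain p where p: "walk F p n" "p 0 = a" "p n = b"
    using shortest_walk[OF ab(4)] unfolding n_def by blast
  have pE: "walk E p n" using p(1) by (rule walk_mono) (simp add: F_def)
  have "n \<noteq> 0"
  proof
    assume "n = 0"
    then show False using p(2,3) ab(3) by simp
  qed
  moreover have "n \<noteq> 1"
  proof
    assume "n = 1"
    then have "{a, b} \<in> F" using p by (simp add: walk_def)
    then show False using ab(1,2) by (simp add: F_def induced_def)
  qed
  ultimately have "1 < n" by simp
  \<comment> \<open>A shortest walk between a nearest pair of distinct vertices of B is an ear of B:
    it repeats no vertex and leaves B at once.\<close>
  have "p 1 \<notin> B"
  proof
    assume p1: "p 1 \<in> B"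
    have seg: "gdist F a (p 1) \<le> 1" "gdist F (p 1) b \<le> n - 1" "reach F a (p 1)" "reach F (p 1) b"
      using gdist_segment[OF p(1), of 0 1] gdist_segment[OF p(1), of 1 n] \<open>1 < n\<close> p(2,3) by simp_all
    show False
    proof (cases "p 1 = a")
      case True
      then show False using closest[OF p1 ab(2)] ab(3) seg \<open>1 < n\<close> unfolding n_def by simp
    next
      case False
      then show False using closest[OF ab(1) p1] seg \<open>1 < n\<close> unfolding n_def by simp
    qed
  qed
  have "p 0 \<in> V" using B ab(1) p(2) by (auto simp: is_block_def)
  then have "p ` {0..n} \<subseteq> V" using walk_in_vertices[OF pE] edge_subset_vertices[OF sg] by auto
  moreover have "no_cut E (B \<union> p ` {0..n})"
    using B pE p ab(1,2) geodesic_inj[OF p(1)] by (intro no_cut_ear) (simp_all add: is_block_def n_def)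
  ultimately have "B \<union> p ` {0..n} = B" using B by (auto simp: is_block_def)
  then show False using \<open>p 1 \<notin> B\<close> \<open>1 < n\<close> by auto
qed

section \<open>Projection onto a block\<close>

definition proj :: "'a set set \<Rightarrow> 'a set \<Rightarrow> 'a \<Rightarrow> 'a" where
  "proj E B u = (THE w. w \<in> B \<and> reach (E - induced E B) u w)"

lemma coord_eq_proj: "coord E f B u = f B (proj E B u)"
  by (simp add: coord_def proj_def)

lemma proj_eq:
  assumes sg: "simple_graph V E" and B: "is_block V E B"
    and w: "w \<in> B" and r: "reach (E - induced E B) u w"
  shows "proj E B u = w"
  unfolding proj_def
proof (rule the_equality)
  show "w \<in> B \<and> reach (E - induced E B) u w" using w r by simp
  fix w' assume w': "w' \<in> B \<and> reach (E - induced E B) u w'"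
  then have "reach (E - induced E B) w' w" using r by (blast intro: reach_trans reach_sym)
  then show "w' = w" using block_vertices_separated[OF sg B _ w] w' by simp
qed

lemma reach_avoiding_block:
  assumes cV: "conn V E" and BV: "B \<subseteq> V" and u: "u \<in> V" and x: "x \<in> B"
    and closest: "\<forall>b\<in>B. gdist E u x \<le> gdist E u b"
  shows "reach (E - induced E B) u x"
proof -
  define n where "n = gdist E u x"
  have "reach E u x" using cV u x BV by (auto simp: conn_def)
  then obtain p where p: "walk E p n" "p 0 = u" "p n = x"
    unfolding n_def by (rule shortest_walk)
  have "p i \<notin> B" if "i < n" for i
  proof
    assume "p i \<in> B"
    then have "n \<le> gdist E u (p i)" using closest unfolding n_def by simp
    then show False using gdist_segment[OF p(1), of 0 i] that p(2) by simp
  qed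
  then have "walk (E - induced E B) p n" using p(1) by (auto simp: walk_def induced_def)
  then show ?thesis using walk_reach p(2,3) by fastforce
qed

lemma proj_closest:
  assumes sg: "simple_graph V E" and cV: "conn V E" and B: "is_block V E B"
    and u: "u \<in> V" and x: "x \<in> B" and closest: "\<forall>b\<in>B. gdist E u x \<le> gdist E u b"
  shows "proj E B u = x"
proof (rule proj_eq[OF sg B x])
  show "reach (E - induced E B) u x"
    using reach_avoiding_block[OF cV _ u x closest] B by (simp add: is_block_def)
qed

lemma proj_in_block:
  assumes sg: "simple_graph V E" and cV: "conn V E" and B: "is_block V E B" and u: "u \<in> V"
  shows "proj E B u \<in> B" "reach (E - induced E B) u (proj E B u)"
proof -
  obtain b0 where "b0 \<in> B" using B by (auto simp: is_block_def)
  then obtain x where x: "x \<in> B" and closest: "\<forall>b\<in>B. gdist E u x \<le> gdist E u b"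
    using ex_has_least_nat[of "\<lambda>b. b \<in> B" b0 "gdist E u"] by blast
  have "reach (E - induced E B) u x"
    using reach_avoiding_block[OF cV _ u x closest] B by (simp add: is_block_def)
  then show "proj E B u \<in> B" "reach (E - induced E B) u (proj E B u)"
    using proj_closest[OF sg cV B u x closest] x by simp_all
qed

lemma proj_self: "simple_graph V E \<Longrightarrow> is_block V E B \<Longrightarrow> w \<in> B \<Longrightarrow> proj E B w = w"
  by (rule proj_eq) simp_all

lemma proj_edge_outside:
  assumes sg: "simple_graph V E" and cV: "conn V E" and B: "is_block V E B"
    and e: "{x, y} \<in> E" and out: "\<not> {x, y} \<subseteq> B"
  shows "proj E B x = proj E B y"
proof -
  have "x \<in> V" using edge_subset_vertices[OF sg e] by simp
  note px = proj_in_block[OF sg cV B this]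
  have "{y, x} \<in> E - induced E B" using e out by (auto simp: induced_def insert_commute)
  then have "reach (E - induced E B) y (proj E B x)" using px(2) by (blast intro: reach_edge reach_trans)
  then show ?thesis using proj_eq[OF sg B px(1)] by simp
qed

section \<open>Lower bound\<close>

lemma reach_proj:
  assumes sg: "simple_graph V E" and cV: "conn V E" and B: "is_block V E B"
    and FE: "F \<subseteq> E" and w0: "w0 \<in> V" and r: "reach F w0 w"
  shows "reach (F \<inter> induced E B) (proj E B w0) (proj E B w)"
  using r unfolding reach_def[of F]
proof (induction rule: rtranclp_induct)
  case (step y z)
  have e: "{y, z} \<in> E" using step(2) FE by auto
  show ?case
  proof (cases "{y, z} \<subseteq> B")
    case True
    then have "proj E B y = y" "proj E B z = z" using proj_self[OF sg B] by auto
    moreover have "{y, z} \<in> F \<inter> induced E B" using step(2) e True by (simp add: induced_def)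
    ultimately show ?thesis using reach_trans[OF step(3) reach_edge] by simp
  next
    case False
    then have "proj E B y = proj E B z" by (rule proj_edge_outside[OF sg cV B e])
    then show ?thesis using step(3) by simp
  qed
qed simp

lemma card_proj_le:
  assumes sg: "simple_graph V E" and cV: "conn V E" and B: "is_block V E B"
    and SW: "S \<subseteq> W" and WV: "W \<subseteq> V" and FE: "F \<subseteq> E" and cW: "conn W F"
    and Sne: "S \<noteq> {}"
  shows "card (proj E B ` S) \<le> card (F \<inter> induced E B) + 1"
proof -
  obtain w0 where w0: "w0 \<in> S" using Sne by blast
  have sub: "proj E B ` S \<subseteq> reachable (F \<inter> induced E B) {proj E B w0}"
  proof
    fix p assume "p \<in> proj E B ` S"
    then obtain w where w: "w \<in> S" "p = proj E B w" by blast
    have "reach F w0 w" using cW w0 w(1) SW unfolding conn_def by blast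
    then have "reach (F \<inter> induced E B) (proj E B w0) (proj E B w)"
      using reach_proj[OF sg cV B FE] w0 SW WV by blast
    then show "p \<in> reachable (F \<inter> induced E B) {proj E B w0}" using w(2) by (simp add: reachable_def)
  qed
  have "finite (F \<inter> induced E B)"
    using finite_subset[OF FE finite_edges[OF sg]] by simp
  then have "finite (reachable (F \<inter> induced E B) {proj E B w0})"
    "card (reachable (F \<inter> induced E B) {proj E B w0}) \<le> card (F \<inter> induced E B) + 1"
    using card_reachable_le[of "F \<inter> induced E B" "{proj E B w0}"] by simp_all
  then show ?thesis using card_mono[OF _ sub] by linarith
qed

lemma sum_card_proj_le:
  assumes sg: "simple_graph V E" and cV: "conn V E"
    and SW: "S \<subseteq> W" and WV: "W \<subseteq> V" and FE: "F \<subseteq> E" and cW: "conn W F"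
    and Sne: "S \<noteq> {}"
  shows "(\<Sum>B\<in>blocks V E. card (proj E B ` S) - 1) \<le> card F"
proof -
  have finF: "finite F" using finite_subset[OF FE finite_edges[OF sg]] .
  have "(\<Sum>B\<in>blocks V E. card (proj E B ` S) - 1) \<le> (\<Sum>B\<in>blocks V E. card (F \<inter> induced E B))"
  proof (rule sum_mono)
    fix B assume "B \<in> blocks V E"
    then have "card (proj E B ` S) \<le> card (F \<inter> induced E B) + 1"
      using card_proj_le[OF sg cV _ SW WV FE cW Sne] by (simp add: blocks_def)
    then show "card (proj E B ` S) - 1 \<le> card (F \<inter> induced E B)" by linarith
  qed
  also have "\<dots> = card (\<Union>B\<in>blocks V E. F \<inter> induced E B)"
    using induced_blocks_disjoint[OF sg] finite_blocks[OF sg] finF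
    by (intro card_UN_disjoint[symmetric]) (auto simp: blocks_def)
  also have "\<dots> \<le> card F" by (rule card_mono[OF finF]) blast
  finally show ?thesis .
qed

section \<open>Upper bound\<close>

lemma clique_edge: "is_clique E B \<Longrightarrow> x \<in> B \<Longrightarrow> y \<in> B \<Longrightarrow> x \<noteq> y \<Longrightarrow> {x, y} \<in> E"
  unfolding is_clique_def by blast

lemma gdist_clique_le:
  assumes "is_clique E B" "x \<in> B" "y \<in> B"
  shows "gdist E x y \<le> 1"
proof (cases "x = y")
  case False
  then show ?thesis by (rule gdist_edge[OF clique_edge[OF assms]])
qed simp

definition center :: "'a set set \<Rightarrow> 'a set \<Rightarrow> 'a set \<Rightarrow> 'a" where
  "center E S B = (SOME x. x \<in> proj E B ` S)"

definition star :: "'a set set \<Rightarrow> 'a set \<Rightarrow> 'a set \<Rightarrow> 'a set set" where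
  "star E S B = (\<lambda>p. {center E S B, p}) ` (proj E B ` S - {center E S B})"

lemma center_in: "S \<noteq> {} \<Longrightarrow> center E S B \<in> proj E B ` S"
  unfolding center_def by (rule someI_ex) blast

lemma card_star_le:
  assumes "finite S" "S \<noteq> {}"
  shows "card (star E S B) \<le> card (proj E B ` S) - 1"
proof -
  have "card (star E S B) \<le> card (proj E B ` S - {center E S B})"
    unfolding star_def by (rule card_image_le) (simp add: assms(1))
  also have "\<dots> = card (proj E B ` S) - 1" using center_in[OF assms(2)] assms(1) by simp
  finally show ?thesis .
qed

lemma star_subset_edges:
  assumes sg: "simple_graph V E" and cV: "conn V E" and B: "is_block V E B"
    and clique: "is_clique E B" and SV: "S \<subseteq> V" and Sne: "S \<noteq> {}"
  shows "star E S B \<subseteq> E"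
proof
  fix e assume "e \<in> star E S B"
  then obtain p where p: "p \<in> proj E B ` S" "p \<noteq> center E S B" "e = {center E S B, p}"
    by (auto simp: star_def)
  have "proj E B ` S \<subseteq> B" using proj_in_block(1)[OF sg cV B] SV by auto
  then have "center E S B \<in> B" "p \<in> B" using center_in[OF Sne] p(1) by auto
  then show "e \<in> E" using clique_edge[OF clique] p(2,3) by simp
qed

lemma reach_star:
  assumes "star E S B \<subseteq> F" "p \<in> proj E B ` S"
  shows "reach F (center E S B) p"
proof (cases "p = center E S B")
  case False
  then have "{center E S B, p} \<in> star E S B" using assms(2) by (auto simp: star_def)
  then have "{center E S B, p} \<in> F" using assms(1) by blast
  then show ?thesis by (rule reach_edge)
qed simp

text \<open>Every vertex of the clique B is adjacent to p (Suc i), so none is nearer to p 0 than p i.\<close>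
lemma proj_start_of_geodesic:
  assumes sg: "simple_graph V E" and cV: "conn V E" and B: "is_block V E B"
    and clique: "is_clique E B" and p: "walk E p n" "gdist E (p 0) (p n) = n" "p 0 \<in> V"
    and i: "i < n" "p i \<in> B" "p (Suc i) \<in> B"
  shows "proj E B (p 0) = p i"
proof (rule proj_closest[OF sg cV B p(3) i(2)], rule ballI)
  fix b assume b: "b \<in> B"
  have BV: "B \<subseteq> V" using B by (simp add: is_block_def)
  have rb: "reach E (p 0) b" using cV p(3) b BV by (auto simp: conn_def)
  have rbi: "reach E b (p (Suc i))" using cV b i(3) BV by (auto simp: conn_def)
  have tail: "reach E (p (Suc i)) (p n)" "gdist E (p (Suc i)) (p n) \<le> n - Suc i"
    using gdist_segment[OF p(1), of "Suc i" n] i(1) by simp_all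
  have "gdist E b (p (Suc i)) \<le> 1" by (rule gdist_clique_le[OF clique b i(3)])
  moreover have "n \<le> gdist E (p 0) b + gdist E b (p n)"
    using gdist_triangle[OF rb reach_trans[OF rbi tail(1)]] p(2) by simp
  moreover have "gdist E b (p n) \<le> gdist E b (p (Suc i)) + gdist E (p (Suc i)) (p n)"
    using gdist_triangle[OF rbi tail(1)] .
  ultimately have "i \<le> gdist E (p 0) b" using tail(2) i(1) by linarith
  then show "gdist E (p 0) (p i) \<le> gdist E (p 0) b"
    using gdist_segment[OF p(1), of 0 i] i(1) by simp
qed

lemma reach_union_stars:
  assumes sg: "simple_graph V E" and cV: "conn V E" and bg: "block_graph V E"
    and SV: "S \<subseteq> V" and stars: "\<And>B. is_block V E B \<Longrightarrow> star E S B \<subseteq> F"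
    and s: "s \<in> S" "s' \<in> S"
  shows "reach F s s'"
proof -
  have sV: "s \<in> V" "s' \<in> V" using s SV by auto
  then have "reach E s s'" using cV by (simp add: conn_def)
  define n where "n = gdist E s s'"
  obtain p where p: "walk E p n" "p 0 = s" "p n = s'"
    using shortest_walk[OF \<open>reach E s s'\<close>] unfolding n_def by blast
  define q where "q = (\<lambda>k. p (n - k))"
  have q: "walk E q n" "q 0 = s'" "q n = s" using walk_rev[OF p(1)] p(2,3) by (simp_all add: q_def)
  have gq: "gdist E (q 0) (q n) = n"
    using gdist_sym[OF \<open>reach E s s'\<close>] q(2,3) by (simp add: n_def)
  have "reach F (p i) (p (Suc i))" if "i < n" for i
  proof -
    have "{p i, p (Suc i)} \<in> E" using p(1) that by (simp add: walk_def)
    then obtain B where B: "is_block V E B" "p i \<in> B" "p (Suc i) \<in> B"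
      by (rule edge_in_block[OF sg])
    have clique: "is_clique E B" using bg B(1) by (simp add: block_graph_def blocks_def)
    have ps: "proj E B s = p i"
      using proj_start_of_geodesic[OF sg cV B(1) clique p(1) _ _ that B(2,3)] p sV
      by (simp add: n_def)
    have qi: "q (n - Suc i) = p (Suc i)" "q (Suc (n - Suc i)) = p i"
      using that by (simp_all add: q_def Suc_diff_Suc)
    have "proj E B (q 0) = q (n - Suc i)"
      using proj_start_of_geodesic[OF sg cV B(1) clique q(1) gq, of "n - Suc i"] that q(2) sV B(2,3) qi
      by simp
    then have "proj E B s' = p (Suc i)" using q(2) qi by simp
    with ps have "p i \<in> proj E B ` S" "p (Suc i) \<in> proj E B ` S" using s by force+
    then have "reach F (center E S B) (p i)" "reach F (center E S B) (p (Suc i))"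
      by (simp_all add: reach_star[OF stars[OF B(1)]])
    then show ?thesis by (rule reach_trans[OF reach_sym])
  qed
  then show ?thesis using reach_chain[of n F p] p(2,3) by simp
qed

lemma steiner_tree_exists:
  assumes sg: "simple_graph V E" and cV: "conn V E" and bg: "block_graph V E"
    and SV: "S \<subseteq> V" and Sne: "S \<noteq> {}"
  obtains W F where "S \<subseteq> W" "W \<subseteq> V" "F \<subseteq> E" "\<forall>e\<in>F. e \<subseteq> W" "conn W F"
    "card F \<le> (\<Sum>B\<in>blocks V E. card (proj E B ` S) - 1)"
proof -
  have finS: "finite S" using SV sg finite_subset by (auto simp: simple_graph_def)
  define F where "F = (\<Union>B\<in>blocks V E. star E S B)"
  define W where "W = reachable F S"
  have stars: "star E S B \<subseteq> F" if "is_block V E B" for B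
    using that unfolding F_def blocks_def by blast
  have FE: "F \<subseteq> E"
    using star_subset_edges[OF sg cV _ _ SV Sne] bg
    unfolding F_def blocks_def block_graph_def by blast
  have "card F \<le> (\<Sum>B\<in>blocks V E. card (star E S B))"
    unfolding F_def by (rule card_UN_le[OF finite_blocks[OF sg]])
  also have "\<dots> \<le> (\<Sum>B\<in>blocks V E. card (proj E B ` S) - 1)"
    by (rule sum_mono) (rule card_star_le[OF finS Sne])
  finally have "card {e \<in> F. e \<subseteq> W} \<le> (\<Sum>B\<in>blocks V E. card (proj E B ` S) - 1)"
    using card_mono[OF finite_subset[OF FE finite_edges[OF sg]], of "{e \<in> F. e \<subseteq> W}"] by auto
  moreover have "conn W {e \<in> F. e \<subseteq> W}"
    unfolding W_def by (rule conn_reachable) (use reach_union_stars[OF sg cV bg SV stars] in blast)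
  moreover have "W \<subseteq> V"
  proof
    fix y assume "y \<in> W"
    then obtain s where "s \<in> S" "reach F s y" by (auto simp: W_def reachable_def)
    then show "y \<in> V" using reach_closed[of F s y V] SV FE edge_subset_vertices[OF sg] by blast
  qed
  moreover have "S \<subseteq> W" unfolding W_def by (rule reachable_base)
  ultimately show thesis using FE by (intro that) auto
qed

lemma steiner_dist_eqI:
  assumes "S \<subseteq> W" "W \<subseteq> V" "F \<subseteq> E" "\<forall>e\<in>F. e \<subseteq> W" "conn W F" "card F \<le> N"
    and lower: "\<And>W F. S \<subseteq> W \<Longrightarrow> W \<subseteq> V \<Longrightarrow> F \<subseteq> E \<Longrightarrow> conn W F \<Longrightarrow> N \<le> card F"
  shows "steiner_dist V E S = N"
  unfolding steiner_dist_def
proof (rule Least_equality)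
  have "card F = N" using assms(6) lower[OF assms(1,2,3,5)] by simp
  then show "\<exists>W F. S \<subseteq> W \<and> W \<subseteq> V \<and> F \<subseteq> E \<and> (\<forall>e\<in>F. e \<subseteq> W) \<and> conn W F \<and> card F = N"
    using assms(1-5) by blast
qed (use lower in blast)

lemma ell_eq_card_proj:
  assumes sg: "simple_graph V E" and cV: "conn V E" and hm: "hamming_maps V E f"
    and B: "B \<in> blocks V E" and SV: "S \<subseteq> V"
  shows "ell E f B S = card (proj E B ` S)"
proof -
  have "proj E B ` S \<subseteq> B" using proj_in_block(1)[OF sg cV _] B SV by (auto simp: blocks_def)
  moreover have "inj_on (f B) B" using hm B by (simp add: hamming_maps_def)
  moreover have "coord E f B ` S = f B ` proj E B ` S" by (auto simp: coord_eq_proj)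
  ultimately show ?thesis unfolding ell_def by (simp add: card_image inj_on_subset)
qed

theorem theorem2:
  fixes V :: "'a set" and E :: "'a set set" and f :: "'a set \<Rightarrow> 'a \<Rightarrow> nat" and S :: "'a set"
  assumes "simple_graph V E"
    and "conn V E"
    and "block_graph V E"
    and "hamming_maps V E f"
    and "S \<subseteq> V"
    and "2 \<le> card S" and "card S \<le> card V"
  shows "int (steiner_dist V E S) =
           (\<Sum>B\<in>blocks V E. int (ell E f B S)) - int (card (blocks V E))"
proof -
  note sg = assms(1) and cV = assms(2) and SV = assms(5)
  have Sne: "S \<noteq> {}" and finS: "finite S" using assms(6) card.infinite by fastforce+
  obtain W F where tree: "S \<subseteq> W" "W \<subseteq> V" "F \<subseteq> E" "\<forall>e\<in>F. e \<subseteq> W" "conn W F"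
    "card F \<le> (\<Sum>B\<in>blocks V E. card (proj E B ` S) - 1)"
    using steiner_tree_exists[OF sg cV assms(3) SV Sne] .
  have "steiner_dist V E S = (\<Sum>B\<in>blocks V E. card (proj E B ` S) - 1)"
    using steiner_dist_eqI[OF tree] sum_card_proj_le[OF sg cV _ _ _ _ Sne] by blast
  moreover have "1 \<le> card (proj E B ` S)" for B
    using Sne finS by (simp add: Suc_le_eq card_gt_0_iff)
  moreover have "ell E f B S = card (proj E B ` S)" if "B \<in> blocks V E" for B
    by (rule ell_eq_card_proj[OF sg cV assms(4) that SV])
  ultimately show ?thesis by (simp add: of_nat_diff sum_subtractf)
qed

end
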